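(* For all $M\in\Lambda_R$: if $M\to^* M_1$ and $M\to^* M_2$, then there is $M_3\in\Lambda_R$ such that $M_1\to^* M_3$ and $M_2\to^* M_3$.
   Context: $\Lambda_R\ni M,N ::= x\mid\lambda x.M\mid MN\mid M.l\mid R\mid M\oplus R$, with records $R ::= \langle l_i=M_i\mid i\in I\rangle$ ($I$ finite, labels pairwise distinct), $x$ ranging over variables and $l$ over labels; terms are identified up to renaming of bound variables. Reduction $\to$ is the least compatible relation (closed under all term constructors) containing $(\lambda x.M)N\to M[N/x]$ (capture-avoiding substitution); $\langle l_i=M_i\mid i\in I\rangle.l_j\to M_j$ if $j\in I$; $\langle l_i=M_i\mid i\in I\rangle\oplus\langle l_j=N_j\mid j\in J\rangle\to\langle l_i=M_i,\ l_j=N_j\mid i\in I\setminus J,\ j\in J\rangle$. $\to^*$ is the reflexive transitive closure of $\to$. *)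

theory Defs
  imports Main "HOL-Library.Finite_Map"
begin

text \<open>Bound variables are
represented by de Bruijn indices (terms up to alpha-equivalence). A record
<l_i = M_i | i in I> (I finite, labels pairwise distinct) is a finite map
from labels to terms. The second argument of Ext (record extension M (+) R)
is syntactically a record.\<close>

datatype 'l trm =
    Var nat
  | Lam "'l trm"
  | App "'l trm" "'l trm"
  | Sel "'l trm" 'l
  | Rcd "('l, 'l trm) fmap"
  | Ext "'l trm" "('l, 'l trm) fmap"

primrec lift :: "'l trm \<Rightarrow> nat \<Rightarrow> 'l trm" where
  "lift (Var i) k = (if i < k then Var i else Var (Suc i))"
| "lift (Lam t) k = Lam (lift t (Suc k))"
| "lift (App s t) k = App (lift s k) (lift t k)"
| "lift (Sel t l) k = Sel (lift t k) l"
| "lift (Rcd r) k = Rcd (fmmap (\<lambda>t. lift t k) r)"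
| "lift (Ext t r) k = Ext (lift t k) (fmmap (\<lambda>t. lift t k) r)"

text \<open>subst t k s: capture-avoiding substitution of s for index k in t,
decrementing the free indices above k (the binder is removed).\<close>
primrec subst :: "'l trm \<Rightarrow> nat \<Rightarrow> 'l trm \<Rightarrow> 'l trm" where
  "subst (Var i) k s = (if k < i then Var (i - 1) else if i = k then s else Var i)"
| "subst (Lam t) k s = Lam (subst t (Suc k) (lift s 0))"
| "subst (App t u) k s = App (subst t k s) (subst u k s)"
| "subst (Sel t l) k s = Sel (subst t k s) l"
| "subst (Rcd r) k s = Rcd (fmmap (\<lambda>t. subst t k s) r)"
| "subst (Ext t r) k s = Ext (subst t k s) (fmmap (\<lambda>t. subst t k s) r)"

text \<open>One-step reduction: the least compatible relation containing beta,
record selection and record extension (right record overrides).\<close>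
inductive red :: "'l trm \<Rightarrow> 'l trm \<Rightarrow> bool" (infixl \<open>\<rightarrow>\<^sub>R\<close> 50) where
  beta: "App (Lam M) N \<rightarrow>\<^sub>R subst M 0 N"
| sel: "fmlookup r l = Some M \<Longrightarrow> Sel (Rcd r) l \<rightarrow>\<^sub>R M"
| ext: "Ext (Rcd r1) r2 \<rightarrow>\<^sub>R Rcd (r1 ++\<^sub>f r2)"
| lam: "M \<rightarrow>\<^sub>R M' \<Longrightarrow> Lam M \<rightarrow>\<^sub>R Lam M'"
| appL: "M \<rightarrow>\<^sub>R M' \<Longrightarrow> App M N \<rightarrow>\<^sub>R App M' N"
| appR: "N \<rightarrow>\<^sub>R N' \<Longrightarrow> App M N \<rightarrow>\<^sub>R App M N'"
| selC: "M \<rightarrow>\<^sub>R M' \<Longrightarrow> Sel M l \<rightarrow>\<^sub>R Sel M' l"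
| rcd: "fmlookup r l = Some M \<Longrightarrow> M \<rightarrow>\<^sub>R M' \<Longrightarrow> Rcd r \<rightarrow>\<^sub>R Rcd (fmupd l M' r)"
| extL: "M \<rightarrow>\<^sub>R M' \<Longrightarrow> Ext M r \<rightarrow>\<^sub>R Ext M' r"
| extR: "fmlookup r l = Some N \<Longrightarrow> N \<rightarrow>\<^sub>R N' \<Longrightarrow> Ext M r \<rightarrow>\<^sub>R Ext M (fmupd l N' r)"

abbreviation reds :: "'l trm \<Rightarrow> 'l trm \<Rightarrow> bool" (infixl \<open>\<rightarrow>\<^sub>R\<^sup>*\<close> 50) where
  "M \<rightarrow>\<^sub>R\<^sup>* N \<equiv> red\<^sup>*\<^sup>* M N"

end

theory Submission
  imports Defs "HOL-Library.Confluence"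
begin

text \<open>Tait and Martin-Loef's method with Takahashi's complete development. Parallel
reduction \<open>\<Rightarrow>\<^sub>R\<close> contracts any set of redexes at once, including inside all
fields of a record simultaneously. It lies between one-step reduction and its reflexive
transitive closure, so both have the same reflexive transitive closure. Moreover every parallel
reduct N of M parallel-reduces to the complete development \<open>dev M\<close>, which contracts all redexes
of M; hence \<open>\<Rightarrow>\<^sub>R\<close> has the diamond property and its closure is confluent.\<close>

lemma rtranclp_map:
  "(\<And>x y. R x y \<Longrightarrow> S (f x) (f y)) \<Longrightarrow> R\<^sup>*\<^sup>* x y \<Longrightarrow> S\<^sup>*\<^sup>* (f x) (f y)"
  by (rotate_tac, induction rule: rtranclp_induct) (auto intro: rtranclp.rtrancl_into_rtrancl)

lemma fmrel_fmmap_fmmap: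
  "fmrel R r r' \<Longrightarrow> (\<And>x y. R x y \<Longrightarrow> Q (f x) (g y)) \<Longrightarrow> fmrel Q (fmmap f r) (fmmap g r')"
  unfolding fmap.rel_map by (erule fmap.rel_mono_strong) auto

lemma rtranclp_fmrel:
  assumes field_step: "\<And>r l x y. fmlookup r l = Some x \<Longrightarrow> R x y \<Longrightarrow> S (C r) (C (fmupd l y r))"
    and rel: "fmrel R\<^sup>*\<^sup>* r r'"
  shows "S\<^sup>*\<^sup>* (C r) (C r')"
proof -
  have update: "S\<^sup>*\<^sup>* (C q) (C (fmupd l y q))" if "R\<^sup>*\<^sup>* x y" "fmlookup q l = Some x" for q l x y
    using that
  proof (induction y rule: rtranclp_induct)
    case base
    then have "fmupd l x q = q" by (intro fmap_ext) auto
    then show ?case by simp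
  next
    case (step y z)
    then have "S (C (fmupd l y q)) (C (fmupd l z q))"
      using field_step[of "fmupd l y q" l y z] by simp
    with step show ?case by (simp add: rtranclp.rtrancl_into_rtrancl)
  qed
  \<comment> \<open>move the fields in A to their target values one at a time\<close>
  have "S\<^sup>*\<^sup>* (C r) (C (r ++\<^sub>f fmrestrict_fset A r'))" for A
  proof (induction A)
    case (insert k A)
    show ?case
    proof (cases "fmlookup r' k")
      case None
      then have "fmrestrict_fset (finsert k A) r' = fmrestrict_fset A r'"
        by (intro fmap_ext) auto
      with insert show ?thesis by simp
    next
      case (Some v)
      with rel obtain u where u: "fmlookup r k = Some u" "R\<^sup>*\<^sup>* u v"
        by (cases rule: fmrel_cases[where x = k]) auto
      have "fmlookup (r ++\<^sub>f fmrestrict_fset A r') k = Some u"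
        using u \<open>k |\<notin>| A\<close> by (simp add: fmlookup_dom_iff)
      then have "S\<^sup>*\<^sup>* (C (r ++\<^sub>f fmrestrict_fset A r')) (C (fmupd k v (r ++\<^sub>f fmrestrict_fset A r')))"
        by (rule update[OF u(2)])
      moreover have "fmupd k v (r ++\<^sub>f fmrestrict_fset A r') = r ++\<^sub>f fmrestrict_fset (finsert k A) r'"
        using Some by (intro fmap_ext) (auto simp: fmlookup_dom_iff)
      ultimately show ?thesis
        using insert.IH by (simp add: rtranclp_trans)
    qed
  qed simp
  moreover have "r ++\<^sub>f r' = r'"
    using fmrel_fmdom_eq[OF rel] by (intro fmap_ext) (auto simp: fmdom_notD)
  ultimately show ?thesis by (metis fmrestrict_fset_dom)
qed

lemma lift_lift:
  "i < k + 1 \<Longrightarrow> lift (lift t i) (Suc k) = lift (lift t k) i"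
  by (induction t arbitrary: i k) (auto simp: fmap.map_comp intro!: fmap.map_cong)

lemma lift_subst [simp]:
  "j < i + 1 \<Longrightarrow> lift (subst t j s) i = subst (lift t (i + 1)) j (lift s i)"
  by (induction t arbitrary: i j s) (auto simp: fmap.map_comp lift_lift intro!: fmap.map_cong)

lemma lift_subst_lt:
  "i < j + 1 \<Longrightarrow> lift (subst t j s) i = subst (lift t i) (j + 1) (lift s i)"
  by (induction t arbitrary: i j s) (auto simp: fmap.map_comp lift_lift intro!: fmap.map_cong)

lemma subst_lift [simp]:
  "subst (lift t k) k s = t"
  by (induction t arbitrary: k s) (auto simp: fmap.map_comp intro!: fmap.map_ident_strong)

lemma subst_subst:
  "i < j + 1 \<Longrightarrow> subst (subst t (Suc j) (lift v i)) i (subst u j v) = subst (subst t i u) j v"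
  by (induction t arbitrary: i j u v)
    (auto simp: fmap.map_comp lift_lift [symmetric] lift_subst_lt intro!: fmap.map_cong)

inductive par :: "'l trm \<Rightarrow> 'l trm \<Rightarrow> bool" (infixl \<open>\<Rightarrow>\<^sub>R\<close> 50) where
  pvar: "Var i \<Rightarrow>\<^sub>R Var i"
| plam: "M \<Rightarrow>\<^sub>R M' \<Longrightarrow> Lam M \<Rightarrow>\<^sub>R Lam M'"
| papp: "M \<Rightarrow>\<^sub>R M' \<Longrightarrow> N \<Rightarrow>\<^sub>R N' \<Longrightarrow> App M N \<Rightarrow>\<^sub>R App M' N'"
| pbeta: "M \<Rightarrow>\<^sub>R M' \<Longrightarrow> N \<Rightarrow>\<^sub>R N' \<Longrightarrow> App (Lam M) N \<Rightarrow>\<^sub>R subst M' 0 N'"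
| psel: "M \<Rightarrow>\<^sub>R M' \<Longrightarrow> Sel M l \<Rightarrow>\<^sub>R Sel M' l"
| pselr: "fmrel par r r' \<Longrightarrow> fmlookup r' l = Some M' \<Longrightarrow> Sel (Rcd r) l \<Rightarrow>\<^sub>R M'"
| prcd: "fmrel par r r' \<Longrightarrow> Rcd r \<Rightarrow>\<^sub>R Rcd r'"
| pext: "M \<Rightarrow>\<^sub>R M' \<Longrightarrow> fmrel par r r' \<Longrightarrow> Ext M r \<Rightarrow>\<^sub>R Ext M' r'"
| pextr: "fmrel par r1 r1' \<Longrightarrow> fmrel par r2 r2' \<Longrightarrow> Ext (Rcd r1) r2 \<Rightarrow>\<^sub>R Rcd (r1' ++\<^sub>f r2')"
monos fmap.rel_mono

inductive_cases par_LamE: "Lam M \<Rightarrow>\<^sub>R N"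
inductive_cases par_RcdE: "Rcd r \<Rightarrow>\<^sub>R N"

lemma par_refl: "M \<Rightarrow>\<^sub>R M"
  by (induction M) (auto intro!: par.intros fmap.rel_refl_strong)

lemma par_lift: "M \<Rightarrow>\<^sub>R M' \<Longrightarrow> lift M k \<Rightarrow>\<^sub>R lift M' k"
  by (induction arbitrary: k rule: par.induct) (fastforce intro!: par.intros elim!: fmrel_fmmap_fmmap)+

lemma par_subst: "M \<Rightarrow>\<^sub>R M' \<Longrightarrow> N \<Rightarrow>\<^sub>R N' \<Longrightarrow> subst M k N \<Rightarrow>\<^sub>R subst M' k N'"
proof (induction arbitrary: k N N' rule: par.induct)
  case (pbeta M M' P P')
  have "App (Lam (subst M (Suc k) (lift N 0))) (subst P k N)
          \<Rightarrow>\<^sub>R subst (subst M' (Suc k) (lift N' 0)) 0 (subst P' k N')"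
    using pbeta by (auto intro!: par.pbeta par_lift)
  then show ?case using subst_subst[of 0 k M' N' P'] by simp
qed (fastforce intro!: par.intros par_lift elim!: fmrel_fmmap_fmmap)+

text \<open>The case distinction on \<open>dev M\<close> keeps the recursion primitive; the intended equations
are \<open>dev_App\<close>, \<open>dev_Sel\<close> and \<open>dev_Ext\<close> below.\<close>

primrec dev :: "'l trm \<Rightarrow> 'l trm" where
  "dev (Var i) = Var i"
| "dev (Lam M) = Lam (dev M)"
| "dev (App M N) =
     (case (M, dev M) of (Lam _, Lam P) \<Rightarrow> subst P 0 (dev N) | _ \<Rightarrow> App (dev M) (dev N))"
| "dev (Sel M l) =
     (case (M, dev M) of
        (Rcd _, Rcd r) \<Rightarrow> (case fmlookup r l of Some N \<Rightarrow> N | None \<Rightarrow> Sel (dev M) l)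
      | _ \<Rightarrow> Sel (dev M) l)"
| "dev (Rcd r) = Rcd (fmmap dev r)"
| "dev (Ext M r) =
     (case (M, dev M) of (Rcd _, Rcd q) \<Rightarrow> Rcd (q ++\<^sub>f fmmap dev r) | _ \<Rightarrow> Ext (dev M) (fmmap dev r))"

lemma dev_App [simp]:
  "dev (App M N) = (case M of Lam P \<Rightarrow> subst (dev P) 0 (dev N) | _ \<Rightarrow> App (dev M) (dev N))"
  by (cases M) simp_all

lemma dev_Sel [simp]:
  "dev (Sel M l) =
     (case M of
        Rcd r \<Rightarrow> (case fmlookup r l of Some N \<Rightarrow> dev N | None \<Rightarrow> Sel (Rcd (fmmap dev r)) l)
      | _ \<Rightarrow> Sel (dev M) l)"
  by (cases M) (simp_all split: option.split)

lemma dev_Ext [simp]: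
  "dev (Ext M r) = (case M of Rcd q \<Rightarrow> Rcd (fmmap dev q ++\<^sub>f fmmap dev r) | _ \<Rightarrow> Ext (dev M) (fmmap dev r))"
  by (cases M) simp_all

declare dev.simps(3,4,6) [simp del]

lemma fmrel_par_dev:
  "fmrel (\<lambda>x y. x \<Rightarrow>\<^sub>R y \<and> y \<Rightarrow>\<^sub>R dev x) r r' \<Longrightarrow> fmrel par r' (fmmap dev r)"
proof -
  assume "fmrel (\<lambda>x y. x \<Rightarrow>\<^sub>R y \<and> y \<Rightarrow>\<^sub>R dev x) r r'"
  then have "fmrel (\<lambda>y x. y \<Rightarrow>\<^sub>R dev x) r' r"
    by (subst fmap.rel_flip [symmetric]) (auto elim: fmap.rel_mono_strong)
  then show ?thesis by (simp add: fmap.rel_map)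
qed

lemma par_dev: "M \<Rightarrow>\<^sub>R M' \<Longrightarrow> M' \<Rightarrow>\<^sub>R dev M"
proof (induction rule: par.induct)
  case (papp M M' N N')
  show ?case
  proof (cases M)
    case (Lam P)
    with papp obtain P' where "M' = Lam P'" "P' \<Rightarrow>\<^sub>R dev P" by (auto elim: par_LamE)
    with papp Lam show ?thesis by (auto intro: par.pbeta)
  qed (use papp in \<open>auto intro: par.papp\<close>)
next
  case (pbeta M M' N N')
  then show ?case by (simp add: par_subst)
next
  case (psel M M' l)
  show ?case
  proof (cases M)
    case (Rcd r)
    with psel obtain r' where "M' = Rcd r'" "fmrel par r' (fmmap dev r)" by (auto elim: par_RcdE)
    with Rcd show ?thesis by (auto intro: par.psel par.pselr par.prcd split: option.split)
  qed (use psel in \<open>auto intro: par.psel\<close>)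
next
  case (pselr r r' l M')
  then show ?case by (auto dest!: fmrelD[of _ _ _ l] elim: option.rel_cases)
next
  case (pext M M' r r')
  show ?case
  proof (cases M)
    case (Rcd q)
    with pext obtain q' where "M' = Rcd q'" "fmrel par q' (fmmap dev q)" by (auto elim: par_RcdE)
    with pext Rcd show ?thesis by (auto intro: par.pextr fmrel_par_dev)
  qed (use pext in \<open>auto intro: par.pext fmrel_par_dev\<close>)
qed (auto intro: par.intros fmrel_par_dev)

lemma reds_Lam: "M \<rightarrow>\<^sub>R\<^sup>* M' \<Longrightarrow> Lam M \<rightarrow>\<^sub>R\<^sup>* Lam M'"
  by (rule rtranclp_map[of red red Lam, OF red.lam])

lemma reds_App: "M \<rightarrow>\<^sub>R\<^sup>* M' \<Longrightarrow> N \<rightarrow>\<^sub>R\<^sup>* N' \<Longrightarrow> App M N \<rightarrow>\<^sub>R\<^sup>* App M' N'"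
  using rtranclp_map[of red red "\<lambda>M. App M N", OF red.appL]
    rtranclp_map[of red red "App M'", OF red.appR]
  by (rule rtranclp_trans)

lemma reds_Sel: "M \<rightarrow>\<^sub>R\<^sup>* M' \<Longrightarrow> Sel M l \<rightarrow>\<^sub>R\<^sup>* Sel M' l"
  by (rule rtranclp_map[of red red "\<lambda>M. Sel M l", OF red.selC])

lemma reds_Rcd: "fmrel red\<^sup>*\<^sup>* r r' \<Longrightarrow> Rcd r \<rightarrow>\<^sub>R\<^sup>* Rcd r'"
  by (rule rtranclp_fmrel[where C = Rcd and R = red and S = red, OF red.rcd])

lemma reds_Ext:
  assumes "M \<rightarrow>\<^sub>R\<^sup>* M'" and "fmrel red\<^sup>*\<^sup>* r r'"
  shows "Ext M r \<rightarrow>\<^sub>R\<^sup>* Ext M' r'"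
proof -
  have "Ext M r \<rightarrow>\<^sub>R\<^sup>* Ext M' r"
    by (rule rtranclp_map[of red red "\<lambda>M. Ext M r", OF red.extL assms(1)])
  also have "Ext M' r \<rightarrow>\<^sub>R\<^sup>* Ext M' r'"
    by (rule rtranclp_fmrel[where C = "Ext M'" and R = red and S = red, OF red.extR assms(2)])
  finally show ?thesis .
qed

lemma red_par: "M \<rightarrow>\<^sub>R N \<Longrightarrow> M \<Rightarrow>\<^sub>R N"
proof (induction rule: red.induct)
  case (rcd r l M M')
  then have "fmrel par r (fmupd l M' r)"
    by (auto simp: fmrel_iff option.rel_sel par_refl)
  then show ?case by (rule par.prcd)
next
  case (extR r l N N' M)
  then have "fmrel par r (fmupd l N' r)"
    by (auto simp: fmrel_iff option.rel_sel par_refl)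
  then show ?case by (auto intro: par.pext par_refl)
qed (auto intro: par.intros par_refl fmap.rel_refl_strong)

lemma par_reds: "M \<Rightarrow>\<^sub>R N \<Longrightarrow> M \<rightarrow>\<^sub>R\<^sup>* N"
proof (induction rule: par.induct)
  case (pbeta M M' N N')
  then have "App (Lam M) N \<rightarrow>\<^sub>R\<^sup>* App (Lam M') N'" by (simp add: reds_App reds_Lam)
  then show ?case using red.beta by (rule rtranclp.rtrancl_into_rtrancl)
next
  case (pselr r r' l M')
  have "fmrel red\<^sup>*\<^sup>* r r'" using pselr.IH by (rule fmap.rel_mono_strong) simp
  then have "Sel (Rcd r) l \<rightarrow>\<^sub>R\<^sup>* Sel (Rcd r') l" by (intro reds_Sel reds_Rcd)
  then show ?case using red.sel[OF pselr(2)] by (rule rtranclp.rtrancl_into_rtrancl)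
next
  case (prcd r r')
  have "fmrel red\<^sup>*\<^sup>* r r'" using prcd.IH by (rule fmap.rel_mono_strong) simp
  then show ?case by (rule reds_Rcd)
next
  case (pext M M' r r')
  have "fmrel red\<^sup>*\<^sup>* r r'" using pext.IH(2) by (rule fmap.rel_mono_strong) simp
  with pext.IH(1) show ?case by (rule reds_Ext)
next
  case (pextr r1 r1' r2 r2')
  have "fmrel red\<^sup>*\<^sup>* r1 r1'" using pextr.IH(1) by (rule fmap.rel_mono_strong) simp
  moreover have "fmrel red\<^sup>*\<^sup>* r2 r2'" using pextr.IH(2) by (rule fmap.rel_mono_strong) simp
  ultimately have "Ext (Rcd r1) r2 \<rightarrow>\<^sub>R\<^sup>* Ext (Rcd r1') r2'" by (intro reds_Ext reds_Rcd)
  then show ?case using red.ext by (rule rtranclp.rtrancl_into_rtrancl)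
qed (simp_all add: reds_Lam reds_App reds_Sel)

lemma rtranclp_red_eq_rtranclp_par: "red\<^sup>*\<^sup>* = par\<^sup>*\<^sup>*"
  by (rule rtranclp_subset [symmetric]) (auto intro: red_par par_reds)

lemma strong_confluentp_par: "strong_confluentp par"
proof
  fix M M1 M2 assume "M \<Rightarrow>\<^sub>R M1" "M \<Rightarrow>\<^sub>R M2"
  then have "M1 \<Rightarrow>\<^sub>R dev M" "M2 \<Rightarrow>\<^sub>R dev M" by (simp_all add: par_dev)
  then show "\<exists>M3. par\<^sup>*\<^sup>* M1 M3 \<and> par\<^sup>=\<^sup>= M2 M3" by blast
qed

theorem theorem3p2:
  fixes M M1 M2 :: "'l trm"
  assumes "M \<rightarrow>\<^sub>R\<^sup>* M1" and "M \<rightarrow>\<^sub>R\<^sup>* M2"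
  shows "\<exists>M3. M1 \<rightarrow>\<^sub>R\<^sup>* M3 \<and> M2 \<rightarrow>\<^sub>R\<^sup>* M3"
  using confluentpD[OF strong_confluentp_imp_confluentp[OF strong_confluentp_par]] assms
  unfolding rtranclp_red_eq_rtranclp_par by blast

end
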